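(* Assume $t_m=1$. Let $y\in\mathbb Z_\beta^+$ have β-expansion $y_ny_{n-1}\cdots y_k0^k\bullet$ with $y_k\ne0$, $k\in\mathbb N$. Then $y-{\rm pred}(y)=T_\beta^{k'}(1)$, where $k'\in\{0,1,\dots,m-1\}$ satisfies $k'\equiv k\pmod m$.
   Context: $\beta>1$ is a simple Parry number with $d_\beta(1)=t_1\cdots t_{m-1}t_m$ ($m\ge2$, $t_1\ge1$, $t_m\ge1$, satisfying the Parry condition). The β-expansion of $x>0$ is the greedy expansion $x=\sum_{i\le k}x_i\beta^i$; we write $x=x_k\cdots x_0\bullet$ when $x_i=0$ for $i<0$, and such $x$ (together with $0$) form $\mathbb Z_\beta^+$, the non-negative β-integers. A finite string $x_k\cdots x_0$ over $\{0,\dots,\lceil\beta\rceil-1\}$ is the β-expansion of a β-integer iff each suffix $x_ix_{i-1}\cdots x_0$ ($i\le k$) is lexicographically strictly smaller than $d_\beta(1)$. $\mathbb Z_\beta=\mathbb Z_\beta^+\cup(-\mathbb Z_\beta^+)$, ${\rm pred}(x)=\max\{y\in\mathbb Z_\beta: y<x\}$. $T_\beta(x)=\beta x\bmod 1$, and $T_\beta^i(1)=\sum_{j=i+1}^m t_j\beta^{i-j}$ for $0\le i\le m-1$. *)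

theory Defs
  imports Complex_Main
begin

definition beta_T :: "real \<Rightarrow> real \<Rightarrow> real" where
  "beta_T \<beta> x = \<beta> * x - of_int \<lfloor>\<beta> * x\<rfloor>"

definition renyi_digit :: "real \<Rightarrow> nat \<Rightarrow> int" where
  "renyi_digit \<beta> i = \<lfloor>\<beta> * (beta_T \<beta> ^^ (i - 1)) 1\<rfloor>"

text \<open>Greedy (beta-)expansion of x > 0: with e = floor(log_beta x), so that
  beta^e <= x < beta^(e+1), write z = x / beta^(e+1) in [0,1); the digit of x
  at position i (i <= e) is the (e+1-i)-th greedy digit of z, namely
  floor(beta T^(e-i)(z)); digits at positions i > e are 0.\<close>
definition beta_digit :: "real \<Rightarrow> real \<Rightarrow> int \<Rightarrow> int" where
  "beta_digit \<beta> x i =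
     (let e = \<lfloor>log \<beta> x\<rfloor>; z = x / \<beta> powr (of_int (e + 1)) in
      if i > e then 0 else \<lfloor>\<beta> * (beta_T \<beta> ^^ nat (e - i)) z\<rfloor>)"

definition beta_int_pos :: "real \<Rightarrow> real set" where
  "beta_int_pos \<beta> = {0} \<union> {x. x > 0 \<and> (\<forall>i::int. i < 0 \<longrightarrow> beta_digit \<beta> x i = 0)}"

definition beta_int :: "real \<Rightarrow> real set" where
  "beta_int \<beta> = beta_int_pos \<beta> \<union> uminus ` beta_int_pos \<beta>"

definition beta_pred :: "real \<Rightarrow> real \<Rightarrow> real" where
  "beta_pred \<beta> x = (GREATEST y. y \<in> beta_int \<beta> \<and> y < x)"

end

theory Submission
  imports Defs
begin

(* Dividing by beta^N moves a beta-integer x < beta^N into [0,1), where it becomes a point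
  whose T_beta-orbit reaches 0 within N steps, and its digits are the integer parts read off
  along the orbit.  Because t_m = 1, the quasi-greedy expansion of 1 is (t_1 ... t_(m-1) 0)^omega,
  with tails r_i = T_beta^(i mod m)(1) satisfying beta r_i = digit + r_(i+1).
  Subtracting r_k from y shifts the orbit of y / beta^N down by r_k / beta^(N-j) at step j;
  at the lowest non-zero digit of y the orbit lands on 1 - r_k / beta^k, which then follows the
  tails r_j down to 0, so y - r_k is a beta-integer.  Conversely, for a beta-integer x < y the
  orbits of x and y separate at their first differing digit, after which the orbit of x must
  reach 0; the largest point below 1 whose orbit reaches 0 in s steps is 1 - r_s / beta^s, and
  this forces y - x >= r_k. *)

lemma beta_T_bounds: "0 \<le> beta_T \<beta> x \<and> beta_T \<beta> x < 1"
  unfolding beta_T_def by linarith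

lemma mult_eq_floor_plus_beta_T: "\<beta> * x = of_int \<lfloor>\<beta> * x\<rfloor> + beta_T \<beta> x"
  unfolding beta_T_def by simp

lemma beta_T_eqI:
  assumes "\<beta> * x = of_int n + r" "0 \<le> r" "r < 1"
  shows "beta_T \<beta> x = r"
proof -
  have "\<lfloor>\<beta> * x\<rfloor> = n" using assms by linarith
  then show ?thesis using assms(1) by (simp add: beta_T_def)
qed

lemma beta_T_le: "0 \<le> \<beta> \<Longrightarrow> 0 \<le> x \<Longrightarrow> beta_T \<beta> x \<le> \<beta> * x"
  unfolding beta_T_def by simp

lemma beta_T_iter_nonneg: "0 \<le> u \<Longrightarrow> 0 \<le> (beta_T \<beta> ^^ n) u"
  by (cases n) (auto simp: beta_T_bounds)

lemma beta_T_iter_less_one: "u < 1 \<Longrightarrow> (beta_T \<beta> ^^ n) u < 1"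
  by (cases n) (auto simp: beta_T_bounds)

lemma beta_T_iter_zero [simp]: "(beta_T \<beta> ^^ n) 0 = 0"
  by (induction n) (auto simp: beta_T_def)

lemma beta_T_iter_eq_power_mult:
  assumes "1 \<le> \<beta>" "0 \<le> u" "\<beta> ^ n * u < 1"
  shows "(beta_T \<beta> ^^ n) u = \<beta> ^ n * u"
  using assms(3)
proof (induction n)
  case (Suc n)
  have "\<beta> ^ n * u \<le> \<beta> ^ Suc n * u"
    using assms by (simp add: mult_right_mono)
  then have "(beta_T \<beta> ^^ n) u = \<beta> ^ n * u"
    using Suc by linarith
  moreover have "beta_T \<beta> (\<beta> ^ n * u) = \<beta> ^ Suc n * u"
    by (rule beta_T_eqI[where n = 0]) (use Suc assms in auto)
  ultimately show ?case by simp
qed simp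

lemma beta_T_iter_add_le:
  assumes "0 \<le> \<beta>" "0 \<le> u"
  shows "(beta_T \<beta> ^^ (a + n)) u \<le> \<beta> ^ a * (beta_T \<beta> ^^ n) u"
proof (induction a)
  case (Suc a)
  have "(beta_T \<beta> ^^ (Suc a + n)) u \<le> \<beta> * (beta_T \<beta> ^^ (a + n)) u"
    using beta_T_le beta_T_iter_nonneg assms by simp
  also have "\<dots> \<le> \<beta> * (\<beta> ^ a * (beta_T \<beta> ^^ n) u)"
    using Suc assms by (simp add: mult_left_mono)
  finally show ?case by (simp add: mult.assoc)
qed simp

lemma power_mult_bounded_imp_nonpos:
  fixes \<beta> a :: real
  assumes "1 < \<beta>" "\<And>n. \<beta> ^ n * a < 1"
  shows "a \<le> 0"
proof (rule ccontr)
  assume "\<not> a \<le> 0"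
  moreover obtain n where "1 / a < \<beta> ^ n"
    using real_arch_pow[OF assms(1)] by blast
  ultimately have "1 < \<beta> ^ n * a" by (simp add: field_simps)
  then show False using assms(2)[of n] by simp
qed

lemma beta_T_iter_eq_zero_if_digits_zero:
  assumes "1 < \<beta>" "0 \<le> u" "\<And>j. J \<le> j \<Longrightarrow> \<lfloor>\<beta> * (beta_T \<beta> ^^ j) u\<rfloor> = 0"
  shows "(beta_T \<beta> ^^ J) u = 0"
proof -
  define a where "a = (beta_T \<beta> ^^ J) u"
  have orbit: "(beta_T \<beta> ^^ (n + J)) u = \<beta> ^ n * a" for n
  proof (induction n)
    case (Suc n)
    then show ?case
      using mult_eq_floor_plus_beta_T[of \<beta> "(beta_T \<beta> ^^ (n + J)) u"] assms(3)[of "n + J"]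
      by simp
  qed (simp add: a_def)
  have "\<beta> ^ n * (\<beta> * a) < 1" for n
    using assms(3)[of "n + J"] orbit[of n] by (simp add: floor_eq_iff mult.left_commute)
  then have "\<beta> * a \<le> 0"
    using power_mult_bounded_imp_nonpos[OF assms(1)] by blast
  moreover have "0 \<le> a" unfolding a_def using beta_T_iter_nonneg assms(2) by blast
  ultimately show ?thesis using assms(1) a_def by (simp add: mult_le_0_iff)
qed

lemma beta_T_iter_diff:
  assumes "\<And>j. j < J \<Longrightarrow> \<beta> * x j - x (Suc j) \<in> \<int>"
    and "\<And>j. 0 < j \<Longrightarrow> j \<le> J \<Longrightarrow> 0 \<le> x j - \<beta> ^ j * \<delta> \<and> x j - \<beta> ^ j * \<delta> < 1"
  shows "(beta_T \<beta> ^^ J) (x 0 - \<delta>) = x J - \<beta> ^ J * \<delta>"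
  using assms
proof (induction J)
  case (Suc J)
  obtain d where d: "\<beta> * x J - x (Suc J) = of_int d"
    using Suc.prems(1)[of J] Ints_cases by auto
  have "beta_T \<beta> (x J - \<beta> ^ J * \<delta>) = x (Suc J) - \<beta> ^ Suc J * \<delta>"
    by (rule beta_T_eqI[where n = d]) (use d Suc.prems(2)[of "Suc J"] in \<open>auto simp: algebra_simps\<close>)
  then show ?case using Suc by simp
qed simp

lemma beta_T_orbits_separate:
  assumes "1 < \<beta>" "0 \<le> w" "w < v" "v < 1"
  obtains q where "0 < q"
    and "\<And>n. n < q \<Longrightarrow> (beta_T \<beta> ^^ n) v - (beta_T \<beta> ^^ n) w = \<beta> ^ n * (v - w)"
    and "1 + (beta_T \<beta> ^^ q) v - (beta_T \<beta> ^^ q) w \<le> \<beta> ^ q * (v - w)"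
proof -
  let ?T = "beta_T \<beta>"
  define P where "P n \<longleftrightarrow> (?T ^^ n) v - (?T ^^ n) w = \<beta> ^ n * (v - w)" for n
  have "\<exists>n. \<not> P n"
  proof (rule ccontr)
    assume "\<not> ?thesis"
    then have "\<beta> ^ n * (v - w) = (?T ^^ n) v - (?T ^^ n) w" for n
      by (simp add: P_def)
    moreover have "(?T ^^ n) v - (?T ^^ n) w < 1" for n
      using beta_T_iter_less_one[OF assms(4), where \<beta> = \<beta> and n = n]
        beta_T_iter_nonneg[OF assms(2), where \<beta> = \<beta> and n = n]
      by linarith
    ultimately have "v - w \<le> 0"
      using power_mult_bounded_imp_nonpos[OF assms(1)] by metis
    then show False using assms(3) by simp
  qed
  define q where "q = (LEAST n. \<not> P n)"
  have not_Pq: "\<not> P q" and P_below: "\<And>n. n < q \<Longrightarrow> P n"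
    unfolding q_def using LeastI_ex[OF \<open>\<exists>n. \<not> P n\<close>] not_less_Least by auto
  have "q \<noteq> 0"
    using not_Pq by (metis P_def funpow_0 mult_1 power_0)
  then obtain r where q: "q = Suc r" using not0_implies_Suc by blast
  have Pr: "P r" using P_below q by simp
  have step: "\<beta> * ((?T ^^ r) v - (?T ^^ r) w)
      = of_int (\<lfloor>\<beta> * (?T ^^ r) v\<rfloor> - \<lfloor>\<beta> * (?T ^^ r) w\<rfloor>) + ((?T ^^ q) v - (?T ^^ q) w)"
    using mult_eq_floor_plus_beta_T[of \<beta> "(?T ^^ r) v"] mult_eq_floor_plus_beta_T[of \<beta> "(?T ^^ r) w"]
    by (simp add: q right_diff_distrib)
  have "\<lfloor>\<beta> * (?T ^^ r) v\<rfloor> \<noteq> \<lfloor>\<beta> * (?T ^^ r) w\<rfloor>"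
    using step Pr not_Pq by (auto simp: P_def q)
  moreover have "0 \<le> \<beta> ^ r * (v - w)"
    using assms by simp
  then have "(?T ^^ r) w \<le> (?T ^^ r) v"
    using Pr by (simp add: P_def)
  then have "\<lfloor>\<beta> * (?T ^^ r) w\<rfloor> \<le> \<lfloor>\<beta> * (?T ^^ r) v\<rfloor>"
    using assms(1) by (intro floor_mono) simp
  ultimately have "1 + (?T ^^ q) v - (?T ^^ q) w \<le> \<beta> * ((?T ^^ r) v - (?T ^^ r) w)"
    using step by linarith
  also have "\<dots> = \<beta> ^ q * (v - w)"
    using Pr by (simp add: P_def q)
  finally show ?thesis
    using that \<open>q \<noteq> 0\<close> P_below by (auto simp: P_def)
qed

lemma powr_floor_log_bounds:
  assumes "1 < \<beta>" "0 < x"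
  shows "\<beta> powr of_int \<lfloor>log \<beta> x\<rfloor> \<le> x" "x < \<beta> powr (of_int \<lfloor>log \<beta> x\<rfloor> + 1)"
proof -
  have x: "\<beta> powr (log \<beta> x) = x" using assms by simp
  show "\<beta> powr of_int \<lfloor>log \<beta> x\<rfloor> \<le> x"
    using assms by (subst x[symmetric], intro powr_mono) auto
  show "x < \<beta> powr (of_int \<lfloor>log \<beta> x\<rfloor> + 1)"
    using assms by (subst x[symmetric], intro powr_less_mono) linarith+
qed

lemma power_mult_divide_power:
  assumes "0 < \<beta>"
  shows "\<beta> ^ n * (x / \<beta> ^ N) = x / \<beta> powr (real N - real n)"
  using assms by (simp add: powr_diff powr_realpow)

lemma beta_digit_eq_floor_orbit:
  assumes "1 < \<beta>" "0 < x" "x < \<beta> ^ N" "i < int N"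
  shows "beta_digit \<beta> x i = \<lfloor>\<beta> * (beta_T \<beta> ^^ nat (int N - 1 - i)) (x / \<beta> ^ N)\<rfloor>"
proof -
  define e where "e = \<lfloor>log \<beta> x\<rfloor>"
  define u where "u = x / \<beta> ^ N"
  have u: "0 \<le> u" using assms by (simp add: u_def)
  have e_low: "\<beta> powr of_int e \<le> x" and e_up: "x < \<beta> powr of_int (e + 1)"
    using powr_floor_log_bounds[OF assms(1,2)] by (simp_all add: e_def)
  have "\<beta> powr of_int e < \<beta> powr real N"
    using e_low assms(1,3) by (simp add: powr_realpow)
  then have "e < int N" using assms(1) by simp
  show ?thesis
  proof (cases "e < i")
    case True
    define n where "n = nat (int N - 1 - i)"
    have "\<beta> * (\<beta> ^ n * u) = x / \<beta> powr of_int i"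
      using power_mult_divide_power[of \<beta> "Suc n" x N] assms(1,4) by (simp add: u_def n_def)
    also have "\<dots> < 1"
    proof -
      have "\<beta> powr of_int (e + 1) \<le> \<beta> powr of_int i"
        using True assms(1) by (intro powr_mono) auto
      with e_up have "x < \<beta> powr of_int i" by (rule less_le_trans)
      then show ?thesis using assms(1) by simp
    qed
    finally have small: "\<beta> * (\<beta> ^ n * u) < 1" .
    moreover have "\<beta> ^ n * u \<le> \<beta> * (\<beta> ^ n * u)"
      using mult_right_mono[of 1 \<beta> "\<beta> ^ n * u"] assms(1) u by simp
    ultimately have "\<beta> ^ n * u < 1" by linarith
    then have "(beta_T \<beta> ^^ n) u = \<beta> ^ n * u"
      using assms(1) u by (intro beta_T_iter_eq_power_mult) auto
    then have "\<lfloor>\<beta> * (beta_T \<beta> ^^ n) u\<rfloor> = 0"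
      using small assms(1) u by (simp add: floor_eq_iff)
    then show ?thesis
      using True by (simp add: beta_digit_def e_def u_def n_def Let_def)
  next
    case False
    define M where "M = nat (int N - 1 - e)"
    have "\<beta> ^ M * u = x / \<beta> powr of_int (e + 1)"
      using power_mult_divide_power[of \<beta> M x N] assms(1) \<open>e < int N\<close>
      by (simp add: u_def M_def add.commute)
    moreover have "x / \<beta> powr of_int (e + 1) < 1"
      using e_up assms(1) by simp
    ultimately have "(beta_T \<beta> ^^ M) u = x / \<beta> powr of_int (e + 1)"
      using assms(1) u beta_T_iter_eq_power_mult by simp
    moreover have "nat (int N - 1 - i) = nat (e - i) + M"
      using False \<open>e < int N\<close> by (simp add: M_def)
    ultimately show ?thesis
      using False by (simp add: beta_digit_def e_def u_def Let_def funpow_add)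
  qed
qed

lemma beta_digits_below_zero_iff_orbit_zero:
  assumes "1 < \<beta>" "0 < x" "x < \<beta> ^ N" "p \<le> N"
  shows "(\<forall>i. i < int N - int p \<longrightarrow> beta_digit \<beta> x i = 0) \<longleftrightarrow> (beta_T \<beta> ^^ p) (x / \<beta> ^ N) = 0"
proof
  assume digits: "\<forall>i. i < int N - int p \<longrightarrow> beta_digit \<beta> x i = 0"
  show "(beta_T \<beta> ^^ p) (x / \<beta> ^ N) = 0"
  proof (rule beta_T_iter_eq_zero_if_digits_zero[OF assms(1)])
    show "0 \<le> x / \<beta> ^ N" using assms by simp
    fix j assume "p \<le> j"
    then have "beta_digit \<beta> x (int N - 1 - int j) = 0"
      using digits by simp
    then show "\<lfloor>\<beta> * (beta_T \<beta> ^^ j) (x / \<beta> ^ N)\<rfloor> = 0"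
      using beta_digit_eq_floor_orbit[OF assms(1-3), of "int N - 1 - int j"] by simp
  qed
next
  assume zero: "(beta_T \<beta> ^^ p) (x / \<beta> ^ N) = 0"
  show "\<forall>i. i < int N - int p \<longrightarrow> beta_digit \<beta> x i = 0"
  proof (intro allI impI)
    fix i assume i: "i < int N - int p"
    then have "nat (int N - 1 - i) = nat (int N - 1 - i - int p) + p" by simp
    then show "beta_digit \<beta> x i = 0"
      using beta_digit_eq_floor_orbit[OF assms(1-3), of i] i zero by (simp add: funpow_add)
  qed
qed

lemma beta_int_pos_iff_orbit_zero:
  assumes "1 < \<beta>" "0 < x" "x < \<beta> ^ N"
  shows "x \<in> beta_int_pos \<beta> \<longleftrightarrow> (beta_T \<beta> ^^ N) (x / \<beta> ^ N) = 0"
  using beta_digits_below_zero_iff_orbit_zero[OF assms order.refl] assms(2)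
  by (auto simp: beta_int_pos_def)

lemma beta_digit_zero [simp]: "beta_digit \<beta> 0 i = 0"
  by (simp add: beta_digit_def Let_def)

lemma beta_int_pos_lowest_digit_orbit:
  assumes "1 < \<beta>" "y \<in> beta_int_pos \<beta>"
    and "beta_digit \<beta> y (int k) \<noteq> 0" "\<forall>i. i < int k \<longrightarrow> beta_digit \<beta> y i = 0"
  obtains p where "0 < p" "0 < y" "y < \<beta> ^ (p + k)"
    and "(beta_T \<beta> ^^ p) (y / \<beta> ^ (p + k)) = 0"
    and "1 \<le> \<beta> * (beta_T \<beta> ^^ (p - 1)) (y / \<beta> ^ (p + k))"
proof -
  have "y \<noteq> 0" using assms(3) by auto
  then have y: "0 < y" using assms(2) by (auto simp: beta_int_pos_def)
  obtain n where "y < \<beta> ^ n" using real_arch_pow[OF assms(1)] by blast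
  also have "\<dots> \<le> \<beta> ^ (Suc n + k)"
    using assms(1) by (intro power_increasing) auto
  finally have y_lt: "y < \<beta> ^ (Suc n + k)" .
  let ?v = "y / \<beta> ^ (Suc n + k)"
  have "(beta_T \<beta> ^^ Suc n) ?v = 0"
    using beta_digits_below_zero_iff_orbit_zero[OF assms(1) y y_lt, of "Suc n"] assms(4) by simp
  moreover have "\<lfloor>\<beta> * (beta_T \<beta> ^^ n) ?v\<rfloor> \<noteq> 0"
    using beta_digit_eq_floor_orbit[OF assms(1) y y_lt, of "int k"] assms(3) by simp
  moreover have "0 \<le> \<beta> * (beta_T \<beta> ^^ n) ?v"
    using assms(1) y beta_T_iter_nonneg[of ?v] by simp
  ultimately show thesis
    using that[of "Suc n"] y y_lt by (simp add: floor_eq_iff)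
qed

lemma orbit_lower_bound:
  assumes "1 \<le> \<beta>" "0 \<le> v" "1 \<le> \<beta> * (beta_T \<beta> ^^ (p - 1)) v" "j < p"
  shows "1 / \<beta> ^ (p - j) \<le> (beta_T \<beta> ^^ j) v"
proof -
  have "(beta_T \<beta> ^^ ((p - 1 - j) + j)) v \<le> \<beta> ^ (p - 1 - j) * (beta_T \<beta> ^^ j) v"
    using assms(1,2) by (intro beta_T_iter_add_le) auto
  moreover have "(p - 1 - j) + j = p - 1" and "\<beta> ^ (p - j) = \<beta> * \<beta> ^ (p - 1 - j)"
    using assms(4) by (simp_all flip: power_Suc add: Suc_diff_Suc)
  ultimately have "1 \<le> \<beta> ^ (p - j) * (beta_T \<beta> ^^ j) v"
    using assms(1,3) by (smt (verit) mult.assoc mult_left_mono)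
  then show ?thesis
    using assms(1) by (simp add: divide_le_eq mult.commute)
qed

(* The tail sum_(j>i) t*_j beta^(i-j) of the quasi-greedy expansion of 1 when t_m = 1. *)
definition quasi_tail :: "real \<Rightarrow> nat \<Rightarrow> nat \<Rightarrow> real" where
  "quasi_tail \<beta> m i = (beta_T \<beta> ^^ (i mod m)) 1"

lemma quasi_tail_0 [simp]: "quasi_tail \<beta> m 0 = 1"
  by (simp add: quasi_tail_def)

locale simple_parry_last_one =
  fixes \<beta> :: real and m :: nat
  assumes gt1: "1 < \<beta>" and m_pos: "0 < m"
    and orbit_m: "(beta_T \<beta> ^^ m) 1 = 0"
    and orbit_nonzero: "\<And>j. 1 \<le> j \<Longrightarrow> j < m \<Longrightarrow> (beta_T \<beta> ^^ j) 1 \<noteq> 0"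
    and last_digit: "renyi_digit \<beta> m = 1"
begin

lemma quasi_tail_pos: "0 < quasi_tail \<beta> m i"
proof (cases "i mod m = 0")
  case False
  then have "(beta_T \<beta> ^^ (i mod m)) 1 \<noteq> 0"
    using orbit_nonzero m_pos by simp
  then show ?thesis
    using beta_T_iter_nonneg[where u = 1 and n = "i mod m"] by (simp add: quasi_tail_def order_less_le)
qed (simp add: quasi_tail_def)

lemma quasi_tail_le_one: "quasi_tail \<beta> m i \<le> 1"
  by (cases "i mod m") (simp_all add: quasi_tail_def beta_T_bounds less_imp_le)

lemma beta_mult_orbit_last: "\<beta> * (beta_T \<beta> ^^ (m - 1)) 1 = 1"
proof -
  have "beta_T \<beta> ((beta_T \<beta> ^^ (m - 1)) 1) = 0"
    using orbit_m m_pos by (metis Suc_diff_1 comp_apply funpow.simps(2))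
  moreover have "\<lfloor>\<beta> * (beta_T \<beta> ^^ (m - 1)) 1\<rfloor> = 1"
    using last_digit by (simp add: renyi_digit_def)
  ultimately show ?thesis
    using mult_eq_floor_plus_beta_T[of \<beta> "(beta_T \<beta> ^^ (m - 1)) 1"] by simp
qed

lemma quasi_tail_Suc:
  "quasi_tail \<beta> m (Suc i) =
     (if Suc i mod m = 0 then \<beta> * quasi_tail \<beta> m i else beta_T \<beta> (quasi_tail \<beta> m i))"
proof (cases "Suc i mod m = 0")
  case True
  then have "i mod m = m - 1"
    using m_pos by (metis mod_Suc diff_Suc_1 nat.distinct(1))
  then show ?thesis
    using True beta_mult_orbit_last by (simp add: quasi_tail_def)
next
  case False
  then have "Suc i mod m = Suc (i mod m)"
    by (metis mod_Suc)
  then show ?thesis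
    using False by (simp add: quasi_tail_def)
qed

lemma quasi_tail_step_Ints: "\<beta> * quasi_tail \<beta> m i - quasi_tail \<beta> m (Suc i) \<in> \<int>"
  by (cases "Suc i mod m = 0") (simp_all add: quasi_tail_Suc beta_T_def)

lemma quasi_tail_Suc_le: "quasi_tail \<beta> m (Suc i) \<le> \<beta> * quasi_tail \<beta> m i"
  using beta_T_le[of \<beta> "quasi_tail \<beta> m i"] quasi_tail_pos[of i] gt1
  by (cases "Suc i mod m = 0") (simp_all add: quasi_tail_Suc)

lemma quasi_tail_add_le: "quasi_tail \<beta> m (i + d) \<le> \<beta> ^ d * quasi_tail \<beta> m i"
proof (induction d)
  case (Suc d)
  have "quasi_tail \<beta> m (i + Suc d) \<le> \<beta> * quasi_tail \<beta> m (i + d)"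
    using quasi_tail_Suc_le by simp
  also have "\<dots> \<le> \<beta> * (\<beta> ^ d * quasi_tail \<beta> m i)"
    using Suc gt1 by simp
  finally show ?case by (simp add: mult.assoc)
qed simp

lemma orbit_zero_below_quasi_tail:
  assumes "u < quasi_tail \<beta> m i" "(beta_T \<beta> ^^ s) u = 0"
  shows "u \<le> quasi_tail \<beta> m i - quasi_tail \<beta> m (i + s) / \<beta> ^ s"
  using assms
proof (induction s arbitrary: i u)
  case (Suc s)
  let ?f = "quasi_tail \<beta> m"
  obtain d where d: "\<beta> * ?f i = of_int d + ?f (Suc i)"
    using quasi_tail_step_Ints[of i] by (metis Ints_cases diff_eq_eq add.commute)
  have u: "\<beta> * u = of_int \<lfloor>\<beta> * u\<rfloor> + beta_T \<beta> u"
    by (rule mult_eq_floor_plus_beta_T)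
  have "\<beta> * u < \<beta> * ?f i"
    using Suc.prems(1) gt1 by simp
  have tail: "?f (Suc i + s) / \<beta> ^ s \<le> ?f (Suc i)"
    using quasi_tail_add_le[of "Suc i" s] gt1 by (simp add: divide_le_eq mult.commute)
  have "\<beta> * u \<le> of_int d + ?f (Suc i) - ?f (Suc i + s) / \<beta> ^ s"
  proof (cases "\<lfloor>\<beta> * u\<rfloor> = d")
    case True
    then have "beta_T \<beta> u < ?f (Suc i)"
      using u d \<open>\<beta> * u < \<beta> * ?f i\<close> by linarith
    moreover have "(beta_T \<beta> ^^ s) (beta_T \<beta> u) = 0"
      using Suc.prems(2) by (simp add: funpow_Suc_right del: funpow.simps)
    ultimately have "beta_T \<beta> u \<le> ?f (Suc i) - ?f (Suc i + s) / \<beta> ^ s"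
      using Suc.IH by blast
    then show ?thesis using u True by linarith
  next
    case False
    have "\<beta> * u < of_int d + 1"
      using d quasi_tail_le_one[of "Suc i"] \<open>\<beta> * u < \<beta> * ?f i\<close> by linarith
    then have "\<lfloor>\<beta> * u\<rfloor> < d" using False by linarith
    then have "\<beta> * u < of_int d" by linarith
    then show ?thesis using tail by linarith
  qed
  also have "\<dots> = \<beta> * (?f i - ?f (i + Suc s) / \<beta> ^ Suc s)"
    using gt1 by (simp add: right_diff_distrib d)
  finally show ?case using gt1 by simp
qed simp

lemma orbit_minus_quasi_tail_zero:
  assumes "0 \<le> v" "0 < p" "(beta_T \<beta> ^^ p) v = 0" "1 \<le> \<beta> * (beta_T \<beta> ^^ (p - 1)) v"
  shows "(beta_T \<beta> ^^ (p + k)) (v - quasi_tail \<beta> m k / \<beta> ^ (p + k)) = 0"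
proof -
  let ?f = "quasi_tail \<beta> m"
  define x where "x j = (if j < p then (beta_T \<beta> ^^ j) v else ?f (j - p))" for j
  have shift: "\<beta> ^ j * (?f k / \<beta> ^ (p + k)) = ?f k / \<beta> ^ (p + k - j)" if "j \<le> p + k" for j
    using that gt1 by (simp add: power_diff)
  have "(beta_T \<beta> ^^ (p + k)) (x 0 - ?f k / \<beta> ^ (p + k)) = x (p + k) - \<beta> ^ (p + k) * (?f k / \<beta> ^ (p + k))"
  proof (rule beta_T_iter_diff)
    fix j assume "j < p + k"
    consider "Suc j < p" | "Suc j = p" | "p \<le> j" by linarith
    then show "\<beta> * x j - x (Suc j) \<in> \<int>"
    proof cases
      case 1
      then show ?thesis by (simp add: x_def beta_T_def)
    next
      case 2
      then have "\<beta> * x j = of_int \<lfloor>\<beta> * x j\<rfloor>"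
        using mult_eq_floor_plus_beta_T[of \<beta> "x j"] assms(3) by (auto simp: x_def)
      then have "\<beta> * x j - x (Suc j) = of_int (\<lfloor>\<beta> * x j\<rfloor> - 1)"
        using 2 by (simp add: x_def)
      then show ?thesis by simp
    next
      case 3
      then show ?thesis
        using quasi_tail_step_Ints[of "j - p"] by (simp add: x_def Suc_diff_le)
    qed
  next
    fix j assume j: "0 < j" "j \<le> p + k"
    have "0 < ?f k / \<beta> ^ (p + k - j)" using quasi_tail_pos gt1 by simp
    moreover have "x j \<le> 1"
      using j beta_T_bounds quasi_tail_le_one
      by (cases j) (auto simp: x_def less_imp_le)
    moreover have "?f k / \<beta> ^ (p + k - j) \<le> x j"
    proof (cases "j < p")
      case True
      have "?f k / \<beta> ^ (p + k - j) \<le> 1 / \<beta> ^ (p - j)"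
        using quasi_tail_pos quasi_tail_le_one gt1 by (intro frac_le) (auto intro: power_increasing)
      also have "\<dots> \<le> x j"
        using orbit_lower_bound[OF _ assms(1,4) True] gt1 True by (simp add: x_def)
      finally show ?thesis .
    next
      case False
      then show ?thesis
        using quasi_tail_add_le[of "j - p" "p + k - j"] j gt1
        by (simp add: x_def divide_le_eq mult.commute)
    qed
    ultimately show "0 \<le> x j - \<beta> ^ j * (?f k / \<beta> ^ (p + k)) \<and> x j - \<beta> ^ j * (?f k / \<beta> ^ (p + k)) < 1"
      using shift j by simp
  qed
  then show ?thesis
    using assms(2) gt1 by (simp add: x_def)
qed

lemma quasi_tail_le_orbit_gap:
  assumes "0 \<le> w" "w < v" "v < 1" "0 < p"
    and "(beta_T \<beta> ^^ p) v = 0" "1 \<le> \<beta> * (beta_T \<beta> ^^ (p - 1)) v"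
    and "(beta_T \<beta> ^^ (p + k)) w = 0"
  shows "quasi_tail \<beta> m k / \<beta> ^ (p + k) \<le> v - w"
proof -
  let ?T = "beta_T \<beta>" and ?f = "quasi_tail \<beta> m"
  obtain q where q: "0 < q"
    and before: "\<And>n. n < q \<Longrightarrow> (?T ^^ n) v - (?T ^^ n) w = \<beta> ^ n * (v - w)"
    and at: "1 + (?T ^^ q) v - (?T ^^ q) w \<le> \<beta> ^ q * (v - w)"
    using beta_T_orbits_separate[OF gt1 assms(1-3)] by blast
  have "q \<le> p"
  proof (rule ccontr)
    assume "\<not> q \<le> p"
    then have "(?T ^^ p) v - (?T ^^ p) w = \<beta> ^ p * (v - w)" using before by simp
    moreover have "0 < \<beta> ^ p * (v - w)" using assms(2) gt1 by simp
    ultimately show False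
      using assms(5) beta_T_iter_nonneg[OF assms(1), where \<beta> = \<beta> and n = p] by linarith
  qed
  have w_q: "(?T ^^ q) w < 1"
    using q beta_T_bounds by (cases q) auto
  have "?f k / \<beta> ^ (p + k - q) \<le> \<beta> ^ q * (v - w)"
  proof (cases "q = p")
    case True
    have "(?T ^^ k) ((?T ^^ p) w) = 0"
      using assms(7) by (simp add: funpow_add add.commute)
    then have "(?T ^^ p) w \<le> 1 - ?f k / \<beta> ^ k"
      using orbit_zero_below_quasi_tail[of "(?T ^^ p) w" 0 k] w_q True by simp
    then show ?thesis
      using at True assms(5) by simp
  next
    case False
    with \<open>q \<le> p\<close> have "q < p" by simp
    have "?f k / \<beta> ^ (p + k - q) \<le> 1 / \<beta> ^ (p - q)"
      using quasi_tail_pos quasi_tail_le_one gt1 by (intro frac_le) (auto intro: power_increasing)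
    also have "\<dots> \<le> (?T ^^ q) v"
      using orbit_lower_bound[OF _ _ assms(6) \<open>q < p\<close>] assms(1,2) gt1 by simp
    finally show ?thesis
      using at w_q by linarith
  qed
  moreover have "\<beta> ^ (p + k) = \<beta> ^ q * \<beta> ^ (p + k - q)"
    using \<open>q \<le> p\<close> by (simp flip: power_add)
  ultimately show ?thesis
    using gt1 by (simp add: divide_le_eq mult.commute mult.left_commute)
qed

context
  fixes y :: real and p k :: nat
  assumes p_pos: "0 < p" and y_pos: "0 < y" and y_less: "y < \<beta> ^ (p + k)"
    and orbit_p: "(beta_T \<beta> ^^ p) (y / \<beta> ^ (p + k)) = 0"
    and orbit_pred: "1 \<le> \<beta> * (beta_T \<beta> ^^ (p - 1)) (y / \<beta> ^ (p + k))"
begin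

lemma orbit_zero_le_minus_quasi_tail:
  assumes "0 \<le> x" "x < y" "(beta_T \<beta> ^^ (p + k)) (x / \<beta> ^ (p + k)) = 0"
  shows "x \<le> y - quasi_tail \<beta> m k"
proof -
  have "quasi_tail \<beta> m k / \<beta> ^ (p + k) \<le> y / \<beta> ^ (p + k) - x / \<beta> ^ (p + k)"
    using assms y_less gt1
    by (intro quasi_tail_le_orbit_gap[OF _ _ _ p_pos orbit_p orbit_pred]) (auto simp: divide_strict_right_mono)
  then show ?thesis
    using gt1 by (simp add: divide_le_cancel flip: diff_divide_distrib)
qed

lemma beta_int_less_le_minus_quasi_tail:
  assumes "x \<in> beta_int \<beta>" "x < y"
  shows "x \<le> y - quasi_tail \<beta> m k"
proof (cases "0 < x")
  case True
  then have "x \<in> beta_int_pos \<beta>"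
    using assms(1) by (auto simp: beta_int_def beta_int_pos_def)
  then have "(beta_T \<beta> ^^ (p + k)) (x / \<beta> ^ (p + k)) = 0"
    using beta_int_pos_iff_orbit_zero[OF gt1 True] assms(2) y_less by simp
  then show ?thesis
    using orbit_zero_le_minus_quasi_tail True assms(2) by simp
next
  case False
  then show ?thesis
    using orbit_zero_le_minus_quasi_tail[of 0] y_pos by simp
qed

lemma minus_quasi_tail_mem_beta_int: "y - quasi_tail \<beta> m k \<in> beta_int \<beta>"
proof (cases "y - quasi_tail \<beta> m k = 0")
  case False
  then have pos: "0 < y - quasi_tail \<beta> m k"
    using orbit_zero_le_minus_quasi_tail[of 0] y_pos by simp
  have "(y - quasi_tail \<beta> m k) / \<beta> ^ (p + k) = y / \<beta> ^ (p + k) - quasi_tail \<beta> m k / \<beta> ^ (p + k)"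
    by (simp add: diff_divide_distrib)
  then have "(beta_T \<beta> ^^ (p + k)) ((y - quasi_tail \<beta> m k) / \<beta> ^ (p + k)) = 0"
    using orbit_minus_quasi_tail_zero[OF _ p_pos orbit_p orbit_pred] y_pos gt1 by simp
  then have "y - quasi_tail \<beta> m k \<in> beta_int_pos \<beta>"
    using beta_int_pos_iff_orbit_zero[OF gt1 pos, of "p + k"] y_less quasi_tail_pos[of k] by simp
  then show ?thesis by (simp add: beta_int_def)
qed (simp add: beta_int_def beta_int_pos_def)

end

end

theorem lemma3p21:
  fixes \<beta> y :: real and m k :: nat
  assumes "\<beta> > 1"
    and "m \<ge> 2"
    and "(beta_T \<beta> ^^ m) 1 = 0"
    and "\<forall>j. 1 \<le> j \<and> j < m \<longrightarrow> (beta_T \<beta> ^^ j) 1 \<noteq> 0"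
    and "renyi_digit \<beta> m = 1"
    and "y \<in> beta_int_pos \<beta>"
    and "beta_digit \<beta> y (int k) \<noteq> 0"
    and "\<forall>i::int. i < int k \<longrightarrow> beta_digit \<beta> y i = 0"
  shows "y - beta_pred \<beta> y = (beta_T \<beta> ^^ (k mod m)) 1"
proof -
  interpret simple_parry_last_one \<beta> m
    using assms(1-5) by unfold_locales auto
  obtain p where p: "0 < p" "0 < y" "y < \<beta> ^ (p + k)"
    "(beta_T \<beta> ^^ p) (y / \<beta> ^ (p + k)) = 0"
    "1 \<le> \<beta> * (beta_T \<beta> ^^ (p - 1)) (y / \<beta> ^ (p + k))"
    using beta_int_pos_lowest_digit_orbit[OF assms(1,6-8)] by blast
  have "beta_pred \<beta> y = y - quasi_tail \<beta> m k"
    unfolding beta_pred_def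
  proof (rule Greatest_equality)
    show "y - quasi_tail \<beta> m k \<in> beta_int \<beta> \<and> y - quasi_tail \<beta> m k < y"
      using minus_quasi_tail_mem_beta_int[OF p] quasi_tail_pos by simp
    show "x \<le> y - quasi_tail \<beta> m k" if "x \<in> beta_int \<beta> \<and> x < y" for x
      using beta_int_less_le_minus_quasi_tail[OF p] that by blast
  qed
  then show ?thesis
    by (simp add: quasi_tail_def)
qed

end
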